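(* For all $n\ge1$ and $k\ge1$, the lists $\mathcal{G}(n,k)$ and $\mathcal{C}(1^02^0\cdots n^0)$ are identical. In particular, the greedy min-flip construction visits every element of $\mathbf{C}(n,k)$ exactly once, and its last element is mapped to $1^02^0\cdots n^0$ by $\mathrm{flip}_n$, so it yields a Hamilton cycle in the $k$-sided pancake network.
   Context: Fix integers $n\ge1$, $k\ge1$. A $k$-coloured permutation of $\{1,\dots,n\}$ is a sequence $\pi=p_1\cdots p_n$ with $p_i=v_i^{c_i}$, where $v_1\cdots v_n$ is a permutation of $\{1,\dots,n\}$ and each $c_i\in\{0,\dots,k-1\}$; the set of these is $\mathbf{C}(n,k)$. A pre-perm is a prefix $p_1\cdots p_j$ ($1\le j\le n$) of some element of $\mathbf{C}(n,k)$. For $p=v^c$ and integer $s$, $p^{+s}=v^{(c+s)\bmod k}$; for $\mathbf{p}=p_1\cdots p_j$, $\mathbf{p}^{+s}=p_1^{+s}\cdots p_j^{+s}$. For $1\le i\le n$, $\mathrm{flip}_i(p_1\cdots p_n)=p_i^{+1}\cdots p_1^{+1}p_{i+1}\cdots p_n$. The $k$-sided pancake network is the directed graph on $\mathbf{C}(n,k)$ with an arc from $\pi$ to $\mathrm{flip}_i(\pi)$ for each $1\le i\le n$. For a pre-perm $\mathbf{p}$ of length $j$, $\rho(\mathbf{p})=r_1\cdots r_m$ ($m=kj$) is the concatenation $\mathbf{p}^{+(k-1)}\mathbf{p}^{+(k-2)}\cdots\mathbf{p}^{+0}$ viewed circularly (indices mod $m$), and $\rho(\mathbf{p})_i=r_{i-j+1}\cdots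 r_{i-1}$ (length $j-1$, indices mod $m$). The list $\mathcal{C}(\mathbf{p})$: if $j=1$, $\mathcal{C}(p_1)=p_1^{+0},\dots,p_1^{+(k-1)}$; if $j\ge2$, $\mathcal{C}(\mathbf{p})$ is the concatenation for $i=m,m-1,\dots,1$ of the lists obtained from $\mathcal{C}(\rho(\mathbf{p})_i)$ by appending $r_i$ to every entry. The greedy min-flip list $\mathcal{G}(n,k)$: start with $G_1=1^0\cdots n^0$; having $G_1,\dots,G_t$, let $i$ be the smallest integer in $\{1,\dots,n\}$ with $\mathrm{flip}_i(G_t)\notin\{G_1,\dots,G_t\}$ and set $G_{t+1}=\mathrm{flip}_i(G_t)$; if no such $i$ exists, stop. *)

theory Defs
  imports Main
begin

text \<open>A coloured symbol v^c is the pair (v, c); a k-coloured permutation / pre-perm is a list of them.\<close>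
type_synonym csym = "nat \<times> nat"
type_synonym cperm = "csym list"

definition shift :: "nat \<Rightarrow> nat \<Rightarrow> csym \<Rightarrow> csym" where
  "shift k s p = (fst p, (snd p + s) mod k)"

definition shiftl :: "nat \<Rightarrow> nat \<Rightarrow> cperm \<Rightarrow> cperm" where
  "shiftl k s ps = map (shift k s) ps"

definition colperms :: "nat \<Rightarrow> nat \<Rightarrow> cperm set" where
  "colperms n k = {\<pi>. length \<pi> = n \<and> distinct (map fst \<pi>) \<and> set (map fst \<pi>) = {1..n}
                     \<and> (\<forall>x\<in>set \<pi>. snd x < k)}"

definition flip :: "nat \<Rightarrow> nat \<Rightarrow> cperm \<Rightarrow> cperm" where
  "flip k i \<pi> = shiftl k 1 (rev (take i \<pi>)) @ drop i \<pi>"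

definition ident :: "nat \<Rightarrow> cperm" where
  "ident n = map (\<lambda>v. (v, 0)) [1..<n+1]"

text \<open>rho(p) = p^{+(k-1)} p^{+(k-2)} ... p^{+0}, as a list (0-based storage; r_l = rho ! ((l-1) mod m)).\<close>
definition rho :: "nat \<Rightarrow> cperm \<Rightarrow> cperm" where
  "rho k p = concat (map (\<lambda>s. shiftl k s p) (rev [0..<k]))"

definition rr :: "nat \<Rightarrow> cperm \<Rightarrow> int \<Rightarrow> csym" where
  "rr k p l = rho k p ! nat ((l - 1) mod int (k * length p))"

definition rho_i :: "nat \<Rightarrow> cperm \<Rightarrow> nat \<Rightarrow> cperm" where
  "rho_i k p i = map (\<lambda>t. rr k p (int i - int (length p) + int t)) [1..<length p]"

lemma length_rho_i[simp]: "length (rho_i k p i) = length p - 1"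
  by (simp add: rho_i_def)

text \<open>The list C(p). (The case p = [] never arises and is set to [] arbitrarily.)\<close>
function Clist :: "nat \<Rightarrow> cperm \<Rightarrow> cperm list" where
  "Clist k p =
    (if length p \<le> 1 then
       (if p = [] then [] else map (\<lambda>s. [shift k s (hd p)]) [0..<k])
     else
       concat (map (\<lambda>i. map (\<lambda>x. x @ [rr k p (int i)]) (Clist k (rho_i k p i)))
                   (rev [1..<k * length p + 1])))"
  by pat_completeness auto
termination
  by (relation "measure (\<lambda>(k, p). length p)") auto

text \<open>The fuel argument only bounds the recursion: since all visited
  elements are distinct elements of C(n,k), at most card C(n,k) - 1 steps can occur,
  so fuel card C(n,k) never runs out before the process stops by itself.\<close>
fun greedy_aux :: "nat \<Rightarrow> nat \<Rightarrow> nat \<Rightarrow> cperm list \<Rightarrow> cperm list" where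
  "greedy_aux 0 n k L = L"
| "greedy_aux (Suc f) n k L =
    (if \<exists>i\<in>{1..n}. flip k i (last L) \<notin> set L
     then greedy_aux f n k
            (L @ [flip k (LEAST i. i \<in> {1..n} \<and> flip k i (last L) \<notin> set L) (last L)])
     else L)"

definition greedy :: "nat \<Rightarrow> nat \<Rightarrow> cperm list" where
  "greedy n k = greedy_aux (card (colperms n k)) n k [ident n]"

end

theory Submission
  imports Defs "HOL-Number_Theory.Cong"
begin

(* Induction on the length j of a pre-perm p shows that C(p) lists every arrangement of the
   coloured symbols of p exactly once, starts at p, is closed up by flip_j, and that each of its
   steps takes the smallest flip not leading back to an element listed before.  C(p) is the
   concatenation, for i = kj, ..., 1, of the blocks C(rho(p)_i) with r_i appended.  Inside a block
   only flips shorter than j are used, and the block is closed under them.  The last element of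
   block i+1 ends in r_(i+1) and flip_j sends it to r_(i+1)^(+1) rho(p)_(i+1); as r_(l-j) = r_l^(+1),
   this is the window r_(i-j+1) ... r_i of rho(p), i.e. the head rho(p)_i r_i of block i.  The
   blocks are disjoint and cover all arrangements because r_1, ..., r_kj enumerate every coloured
   symbol exactly once.  A list with these properties is precisely what the greedy rule produces. *)

section \<open>Colour shifts and the cyclic sequence \<rho>\<close>

lemma shift_shift: "shift k s (shift k t x) = shift k (s + t) x"
  by (simp add: shift_def mod_add_right_eq add.assoc add.commute add.left_commute)

lemma fst_shift [simp]: "fst (shift k s x) = fst x"
  by (simp add: shift_def)

lemma snd_shift_less: "1 \<le> k \<Longrightarrow> snd (shift k s x) < k"
  by (simp add: shift_def)

lemma shift_0: "snd x < k \<Longrightarrow> shift k 0 x = x"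
  by (cases x) (simp add: shift_def)

lemma shift_self: "shift k k x = shift k 0 x"
  by (simp add: shift_def)

lemma shift_inj: "s < k \<Longrightarrow> s' < k \<Longrightarrow> shift k s x = shift k s' x \<Longrightarrow> s = s'"
  using cong_add_lcancel_nat[of "snd x" s s' k] unfolding shift_def cong_def by (simp add: mod_less)

lemma shift_surj:
  assumes "snd a < k" "c < k"
  shows "\<exists>s<k. shift k s a = (fst a, c)"
proof (intro exI conjI)
  show "(c + k - snd a) mod k < k" using assms by simp
  have "(snd a + (c + k - snd a) mod k) mod k = c"
    using assms by (simp add: mod_add_right_eq)
  then show "shift k ((c + k - snd a) mod k) a = (fst a, c)" by (simp add: shift_def)
qed

lemma nth_concat_equal_length:
  assumes "\<forall>a\<in>set xs. length (f a) = j" "x < length xs * j"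
  shows "concat (map f xs) ! x = f (xs ! (x div j)) ! (x mod j)"
  using assms
proof (induction xs arbitrary: x)
  case (Cons a xs)
  show ?case
  proof (cases "x < j")
    case False
    moreover have "0 < j" using Cons.prems by (cases j) auto
    ultimately have "x div j = Suc ((x - j) div j)" "x mod j = (x - j) mod j"
      by (simp_all add: le_div_geq le_mod_geq)
    then show ?thesis using Cons False by (simp add: nth_append)
  qed (use Cons in \<open>simp add: nth_append\<close>)
qed simp

lemma length_rho: "length (rho k p) = k * length p"
  by (simp add: rho_def shiftl_def length_concat comp_def sum_list_triv)

lemma nth_rho:
  assumes "x < k * length p"
  shows "rho k p ! x = shift k (k - 1 - x div length p) (p ! (x mod length p))"
proof -
  have "x div length p < k" using assms by (simp add: less_mult_imp_div_less)
  moreover have "rho k p ! x = shiftl k (rev [0..<k] ! (x div length p)) p ! (x mod length p)"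
    unfolding rho_def
    by (rule nth_concat_equal_length) (use assms in \<open>auto simp: shiftl_def mult.commute\<close>)
  moreover have "0 < length p" using assms by (cases p) auto
  ultimately show ?thesis by (simp add: shiftl_def rev_nth)
qed

definition preperm :: "nat \<Rightarrow> cperm \<Rightarrow> bool" where
  "preperm k p \<longleftrightarrow> 1 \<le> length p \<and> distinct (map fst p) \<and> (\<forall>x\<in>set p. snd x < k)"

lemma preperm_colours: "preperm k p \<Longrightarrow> 1 \<le> k"
  unfolding preperm_def by (cases p) auto

lemma set_rho:
  assumes "preperm k p"
  shows "set (rho k p) = set (map fst p) \<times> {0..<k}"
proof
  show "set (rho k p) \<subseteq> set (map fst p) \<times> {0..<k}"
    using preperm_colours[OF assms]
    by (auto simp: rho_def shiftl_def shift_def intro: rev_image_eqI)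
  show "set (map fst p) \<times> {0..<k} \<subseteq> set (rho k p)"
  proof
    fix x assume "x \<in> set (map fst p) \<times> {0..<k}"
    then obtain a where a: "a \<in> set p" "x = (fst a, snd x)" "snd x < k" by (cases x) auto
    moreover from this obtain s where "s < k" "shift k s a = x"
      using assms shift_surj unfolding preperm_def by metis
    ultimately show "x \<in> set (rho k p)"
      unfolding rho_def shiftl_def by (auto intro!: bexI[of _ s])
  qed
qed

lemma distinct_rho:
  assumes "preperm k p"
  shows "distinct (rho k p)"
proof (rule card_distinct)
  have "card (set (map fst p)) = length p"
    using assms distinct_card unfolding preperm_def by fastforce
  then show "card (set (rho k p)) = length (rho k p)"
    by (simp add: set_rho[OF assms] card_cartesian_product length_rho)
qed

lemma rr_conv_shift_nth:
  assumes "1 \<le> k" "1 \<le> length p"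
  shows "rr k p l = shift k (k - 1 - nat ((l - 1) mod int (k * length p)) div length p)
                    (p ! (nat ((l - 1) mod int (k * length p)) mod length p))"
proof -
  have "0 < k * length p" using assms by (simp del: length_greater_0_conv)
  then have "nat ((l - 1) mod int (k * length p)) < k * length p"
    by (simp add: nat_less_iff)
  then show ?thesis unfolding rr_def by (rule nth_rho)
qed

lemma rr_periodic: "rr k p (l + int (k * length p)) = rr k p l"
  unfolding rr_def by (metis add.commute add_diff_eq mod_add_self1)

lemma rr_of_nat:
  assumes "1 \<le> i" "i \<le> k * length p"
  shows "rr k p (int i) = rho k p ! (i - 1)"
proof -
  have "int i \<le> int (k * length p)" using assms(2) by (simp only: of_nat_le_iff)
  then have "(int i - 1) mod int (k * length p) = int i - 1"
    using assms(1) by (intro mod_pos_pos_trivial) linarith+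
  then show ?thesis unfolding rr_def using assms by (simp add: nat_diff_distrib)
qed

lemma rr_minus_length:
  assumes k: "1 \<le> k" and j: "1 \<le> length p"
  shows "rr k p (l - int (length p)) = shift k 1 (rr k p l)"
proof -
  define j M where "j = length p" and "M = k * length p"
  define x where "x = (l - 1) mod int M"
  define y where "y = (l - int j - 1) mod int M"
  have jpos: "0 < j" and jM: "j \<le> M"
    using j k unfolding j_def M_def by (simp_all del: length_greater_0_conv)
  have x0: "0 \<le> x" and xM: "x < int M" using jpos jM unfolding x_def by simp_all
  have yx: "y = (x - int j) mod int M"
    unfolding x_def y_def by (simp add: mod_diff_left_eq diff_diff_eq2 algebra_simps)
  have L: "rr k p l = shift k (k - 1 - nat x div j) (p ! (nat x mod j))"
    using rr_conv_shift_nth[OF k j, of l] unfolding x_def M_def j_def by simp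
  have R: "rr k p (l - int j) = shift k (k - 1 - nat y div j) (p ! (nat y mod j))"
    using rr_conv_shift_nth[OF k j, of "l - int j"] unfolding y_def M_def j_def by (simp add: algebra_simps)
  have xdk: "nat x div j < k"
    using xM x0 unfolding M_def j_def by (simp add: less_mult_imp_div_less nat_less_iff)
  show ?thesis
  proof (cases "int j \<le> x")
    case True
    then have "nat y = nat x - j" using yx xM by simp
    then have d: "nat x div j = Suc (nat y div j)" and m: "nat y mod j = nat x mod j"
      using True jpos by (simp_all add: le_div_geq le_mod_geq nat_le_iff)
    then have "k - 1 - nat y div j = (k - 1 - nat x div j) + 1" using xdk by linarith
    then show ?thesis unfolding j_def[symmetric] L R m by (simp add: shift_shift)
  next
    case False
    have "y = (x - int j + int M) mod int M" unfolding yx by simp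
    also have "\<dots> = x - int j + int M"
      using False x0 jM by (intro mod_pos_pos_trivial) linarith+
    moreover have "int ((k - 1) * j) = int M - int j"
      using jM unfolding M_def j_def by (simp add: of_nat_diff diff_mult_distrib)
    ultimately have "y = x + int ((k - 1) * j)" by simp
    then have "nat y = nat x + (k - 1) * j"
      using x0 by (metis nat_add_distrib nat_int of_nat_0_le_iff)
    moreover have xj: "nat x < j" using False x0 by linarith
    ultimately have "nat y div j = k - 1" "nat y mod j = nat x" "nat x div j = 0" "nat x mod j = nat x"
      using jpos by simp_all
    then show ?thesis unfolding j_def[symmetric] L R using k by (simp add: shift_shift shift_self)
  qed
qed

lemma fst_rr:
  assumes "1 \<le> k" "1 \<le> length p"
  shows "fst (rr k p l) = fst (p ! nat ((l - 1) mod int (length p)))"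
proof -
  have "0 < k * length p" using assms by (simp del: length_greater_0_conv)
  then have "0 \<le> (l - 1) mod int (k * length p)" by simp
  then have "nat ((l - 1) mod int (k * length p)) mod length p = nat ((l - 1) mod int (length p))"
    using nat_mod_distrib[of "(l - 1) mod int (k * length p)" "int (length p)"]
    by (simp add: mod_mod_cancel)
  then show ?thesis using rr_conv_shift_nth[OF assms, of l] by simp
qed

lemma fst_rr_in_set:
  assumes "1 \<le> k" "1 \<le> length p"
  shows "fst (rr k p l) \<in> set (map fst p)"
proof -
  have "nat ((l - 1) mod int (length p)) < length p"
    using assms(2) by (simp add: nat_less_iff del: length_greater_0_conv)
  then show ?thesis by (simp add: fst_rr[OF assms])
qed

lemma snd_rr_less: "1 \<le> k \<Longrightarrow> 1 \<le> length p \<Longrightarrow> snd (rr k p l) < k"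
  using rr_conv_shift_nth[of k p l] snd_shift_less by simp

lemma rr_initial:
  assumes "preperm k p" "t < length p"
  shows "rr k p (int t + 1 - int (length p)) = p ! t"
proof -
  have k: "1 \<le> k" using preperm_colours[OF assms(1)] .
  have j: "1 \<le> length p" using assms(2) by simp
  have "int t < int (k * length p)" using assms(2) k
    by (metis less_le_trans mult_le_mono1 mult_1 of_nat_less_iff)
  then have "rr k p (int t + 1) = shift k (k - 1) (p ! t)"
    using rr_conv_shift_nth[OF k j, of "int t + 1"] assms(2) by simp
  then have "rr k p (int t + 1 - int (length p)) = shift k 0 (p ! t)"
    using rr_minus_length[OF k j, of "int t + 1"] k by (simp add: shift_shift shift_self)
  also have "\<dots> = p ! t"
    using assms unfolding preperm_def by (simp add: shift_0)
  finally show ?thesis .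
qed

lemma rr_window_eq_self:
  assumes "preperm k p"
  shows "map (\<lambda>t. rr k p (int t + 1 - int (length p))) [0..<length p] = p"
  by (rule nth_equalityI) (simp_all add: rr_initial[OF assms])

lemma rr_inj:
  assumes "preperm k p" "i \<in> {1..k * length p}" "i' \<in> {1..k * length p}"
    and "rr k p (int i) = rr k p (int i')"
  shows "i = i'"
proof -
  have "rho k p ! (i - 1) = rho k p ! (i' - 1)" using assms rr_of_nat by simp
  then have "i - 1 = i' - 1"
    using assms(2,3) nth_eq_iff_index_eq[OF distinct_rho[OF assms(1)]] by (auto simp: length_rho)
  then show ?thesis using assms(2,3) by auto
qed

lemma rr_surj:
  assumes "preperm k p" "fst x \<in> set (map fst p)" "snd x < k"
  shows "\<exists>i\<in>{1..k * length p}. x = rr k p (int i)"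
proof -
  have "x \<in> set (rho k p)" using set_rho[OF assms(1)] assms(2,3) by (cases x) auto
  then obtain y where "y < k * length p" "x = rho k p ! y" by (metis in_set_conv_nth length_rho)
  then show ?thesis using rr_of_nat[of "Suc y" k p] by (intro bexI[of _ "Suc y"]) auto
qed

lemma map_fst_rr_window:
  assumes "1 \<le> k" "1 \<le> length p"
  shows "map (\<lambda>t. fst (rr k p (l + int t))) [0..<length p]
         = rotate (nat ((l - 1) mod int (length p))) (map fst p)"
proof (rule nth_equalityI)
  fix t assume "t < length (map (\<lambda>t. fst (rr k p (l + int t))) [0..<length p])"
  then have t: "t < length p" by simp
  define a where "a = (l - 1) mod int (length p)"
  have a: "0 \<le> a" using assms(2) unfolding a_def by (simp del: length_greater_0_conv)
  have "(l + int t - 1) mod int (length p) = (a + int t) mod int (length p)"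
    unfolding a_def by (metis add.commute add_diff_eq diff_add_eq mod_add_left_eq)
  also have "\<dots> = int ((nat a + t) mod length p)"
    using a by (simp add: zmod_int)
  finally have "nat ((l + int t - 1) mod int (length p)) = (nat a + t) mod length p" by simp
  then show "map (\<lambda>t. fst (rr k p (l + int t))) [0..<length p] ! t
             = rotate (nat ((l - 1) mod int (length p))) (map fst p) ! t"
    using t unfolding a_def
    by (simp add: nth_rotate fst_rr[OF assms] algebra_simps del: length_greater_0_conv)
qed simp

lemma rho_i_snoc_rr:
  "1 \<le> length p \<Longrightarrow>
   rho_i k p i @ [rr k p (int i)]
   = map (\<lambda>t. rr k p (int i - int (length p) + int t)) [1..<length p + 1]"
  by (simp add: rho_i_def)

lemma shift_rr_Cons_rho_i:
  assumes "1 \<le> k" "1 \<le> length p"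
  shows "shift k 1 (rr k p (int i)) # rho_i k p i
         = map (\<lambda>t. rr k p (int i - int (length p) + int t)) [0..<length p]"
proof -
  have "[0..<length p] = 0 # [Suc 0..<length p]" using assms(2) by (intro upt_conv_Cons) linarith
  then show ?thesis using rr_minus_length[OF assms, of "int i"] by (simp add: rho_i_def)
qed

lemma map_fst_rho_i_snoc_rr:
  assumes "1 \<le> k" "1 \<le> length p"
  shows "map fst (rho_i k p i @ [rr k p (int i)])
         = rotate (nat ((int i - int (length p)) mod int (length p))) (map fst p)"
proof -
  have "rho_i k p i @ [rr k p (int i)]
        = map (\<lambda>t. rr k p (int i - int (length p) + int t)) (map Suc [0..<length p])"
    using rho_i_snoc_rr[OF assms(2)] by (simp add: map_Suc_upt)
  then have "map fst (rho_i k p i @ [rr k p (int i)])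
        = map (\<lambda>t. fst (rr k p (int i - int (length p) + 1 + int t))) [0..<length p]"
    by (simp add: algebra_simps)
  then show ?thesis by (simp add: map_fst_rr_window[OF assms])
qed

lemma preperm_rho_i:
  assumes "preperm k p" "2 \<le> length p"
  shows "preperm k (rho_i k p i)"
    and "set (map fst (rho_i k p i)) = set (map fst p) - {fst (rr k p (int i))}"
proof -
  have k: "1 \<le> k" and j: "1 \<le> length p" using preperm_colours[OF assms(1)] assms(2) by simp_all
  have "distinct (map fst (rho_i k p i @ [rr k p (int i)]))"
    and s: "set (map fst (rho_i k p i @ [rr k p (int i)])) = set (map fst p)"
    using assms(1) unfolding map_fst_rho_i_snoc_rr[OF k j] preperm_def by simp_all
  then have d: "distinct (map fst (rho_i k p i))" "fst (rr k p (int i)) \<notin> set (map fst (rho_i k p i))"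
    by simp_all
  then show "set (map fst (rho_i k p i)) = set (map fst p) - {fst (rr k p (int i))}"
    using s by (auto intro: rev_image_eqI)
  have "\<forall>x\<in>set (rho_i k p i). snd x < k"
    unfolding rho_i_def using snd_rr_less[OF k j] by auto
  then show "preperm k (rho_i k p i)" unfolding preperm_def using d assms(2) by auto
qed

section \<open>Arrangements and flips\<close>

definition arrangements :: "nat \<Rightarrow> cperm \<Rightarrow> cperm set" where
  "arrangements k p = {\<pi>. length \<pi> = length p \<and> distinct (map fst \<pi>)
     \<and> set (map fst \<pi>) = set (map fst p) \<and> (\<forall>x\<in>set \<pi>. snd x < k)}"

lemma arrangements_ident: "arrangements k (ident n) = colperms n k"
proof -
  have "set (map fst (ident n)) = {1..n}" "length (ident n) = n" by (auto simp: ident_def)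
  then show ?thesis unfolding arrangements_def colperms_def by simp
qed

lemma arrangements_eq_UN_snoc_rr:
  assumes "preperm k p" "2 \<le> length p"
  shows "arrangements k p
         = (\<Union>i\<in>{1..k * length p}. (\<lambda>y. y @ [rr k p (int i)]) ` arrangements k (rho_i k p i))"
proof -
  have k: "1 \<le> k" and j: "1 \<le> length p" using preperm_colours[OF assms(1)] assms(2) by simp_all
  have snoc_iff: "y @ [x] \<in> arrangements k p \<longleftrightarrow>
      fst x \<in> set (map fst p) \<and> snd x < k \<and> y \<in> arrangements k q"
    if "set (map fst q) = set (map fst p) - {fst x}" "length q = length p - 1" for x y q
  proof -
    have "Suc (length y) = length p \<longleftrightarrow> length y = length p - 1" using j by linarith
    then show ?thesis using that unfolding arrangements_def by simp blast
  qed
  show ?thesis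
  proof (intro equalityI subsetI)
    fix \<pi> assume \<pi>: "\<pi> \<in> arrangements k p"
    have "\<pi> \<noteq> []" using \<pi> j unfolding arrangements_def by auto
    then obtain y x where yx: "\<pi> = y @ [x]" using rev_exhaust by blast
    then have "fst x \<in> set (map fst p)" "snd x < k" using \<pi> unfolding arrangements_def by auto
    then obtain i where i: "i \<in> {1..k * length p}" and x: "x = rr k p (int i)"
      using rr_surj[OF assms(1)] by blast
    then have "y \<in> arrangements k (rho_i k p i)"
      using \<pi> snoc_iff[OF preperm_rho_i(2)[OF assms] length_rho_i] unfolding yx by simp
    then show "\<pi> \<in> (\<Union>i\<in>{1..k * length p}. (\<lambda>y. y @ [rr k p (int i)]) ` arrangements k (rho_i k p i))"
      using i unfolding yx x by blast
  next
    fix \<pi> assume "\<pi> \<in> (\<Union>i\<in>{1..k * length p}. (\<lambda>y. y @ [rr k p (int i)]) ` arrangements k (rho_i k p i))"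
    then obtain i y where "\<pi> = y @ [rr k p (int i)]" "y \<in> arrangements k (rho_i k p i)" by blast
    then show "\<pi> \<in> arrangements k p"
      using snoc_iff[OF preperm_rho_i(2)[OF assms] length_rho_i] fst_rr_in_set[OF k j] snd_rr_less[OF k j]
      by simp
  qed
qed

lemma flip_snoc: "l \<le> length x \<Longrightarrow> flip k l (x @ [r]) = flip k l x @ [r]"
  by (simp add: flip_def)

lemma flip_length_snoc: "flip k (Suc (length x)) (x @ [r]) = shift k 1 r # flip k (length x) x"
  by (simp add: flip_def shiftl_def)

lemma flip_in_arrangements:
  assumes "\<pi> \<in> arrangements k p" "1 \<le> k"
  shows "flip k l \<pi> \<in> arrangements k p"
proof -
  have "map fst (flip k l \<pi>) = rev (take l (map fst \<pi>)) @ drop l (map fst \<pi>)"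
    by (simp add: flip_def shiftl_def comp_def take_map drop_map rev_map)
  moreover have "distinct (rev (take l (map fst \<pi>)) @ drop l (map fst \<pi>))
                 \<longleftrightarrow> distinct (map fst \<pi>)"
    by (metis distinct_append distinct_rev set_rev append_take_drop_id)
  moreover have "set (rev (take l (map fst \<pi>)) @ drop l (map fst \<pi>)) = set (map fst \<pi>)"
    by (metis set_append set_rev append_take_drop_id)
  moreover have "length (flip k l \<pi>) = length \<pi>" by (simp add: flip_def shiftl_def)
  moreover have "\<forall>x\<in>set (flip k l \<pi>). snd x < k"
    using assms unfolding arrangements_def flip_def shiftl_def
    by (auto simp: snd_shift_less dest: in_set_dropD)
  ultimately show ?thesis using assms(1) unfolding arrangements_def by (simp only: mem_Collect_eq)
qed

section \<open>Min-flip paths\<close>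

text \<open>In a path that never revisits an element, \<open>min_flip_step\<close> is exactly the greedy
  rule: \<open>V\<close> is the set of elements visited so far, and every flip shorter than the one taken
  leads back into it.\<close>

definition min_flip_step :: "nat \<Rightarrow> nat \<Rightarrow> cperm set \<Rightarrow> cperm \<Rightarrow> cperm \<Rightarrow> bool" where
  "min_flip_step k N V x y \<longleftrightarrow> (\<exists>l\<in>{1..N}. y = flip k l x \<and> (\<forall>i\<in>{1..<l}. flip k i x \<in> V))"

fun min_flip_path :: "nat \<Rightarrow> nat \<Rightarrow> cperm set \<Rightarrow> cperm list \<Rightarrow> bool" where
  "min_flip_path k N V (x # y # zs) \<longleftrightarrow>
     min_flip_step k N (insert x V) x y \<and> min_flip_path k N (insert x V) (y # zs)"
| "min_flip_path k N V _ \<longleftrightarrow> True"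

lemma min_flip_step_mono:
  "min_flip_step k N V x y \<Longrightarrow> V \<subseteq> V' \<Longrightarrow> N \<le> N' \<Longrightarrow> min_flip_step k N' V' x y"
  unfolding min_flip_step_def by fastforce

lemma min_flip_path_mono:
  "min_flip_path k N V L \<Longrightarrow> V \<subseteq> V' \<Longrightarrow> N \<le> N' \<Longrightarrow> min_flip_path k N' V' L"
proof (induction k N V L arbitrary: V' rule: min_flip_path.induct)
  case (1 k N V x y zs)
  then show ?case by (auto intro: min_flip_step_mono)
qed auto

lemma min_flip_path_append:
  assumes "min_flip_path k N V A" "min_flip_path k N (V \<union> set A) B"
    and "A \<noteq> [] \<Longrightarrow> B \<noteq> [] \<Longrightarrow> min_flip_step k N (V \<union> set A) (last A) (hd B)"
  shows "min_flip_path k N V (A @ B)"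
  using assms
proof (induction A arbitrary: V rule: induct_list012)
  case (2 x)
  then show ?case by (cases B) (auto simp: insert_absorb)
next
  case (3 x y zs)
  have "insert x V \<union> set (y # zs) = V \<union> set (x # y # zs)" by auto
  then show ?case using 3 by simp
qed simp

lemma min_flip_path_map_snoc:
  assumes "min_flip_path k N V L" "\<forall>x\<in>set L. N \<le> length x"
  shows "min_flip_path k N ((\<lambda>x. x @ [r]) ` V) (map (\<lambda>x. x @ [r]) L)"
  using assms
proof (induction k N V L rule: min_flip_path.induct)
  case (1 k N V x y zs)
  then obtain l where l: "l \<in> {1..N}" "y = flip k l x" "\<forall>i\<in>{1..<l}. flip k i x \<in> insert x V"
    by (auto simp: min_flip_step_def)
  have "\<And>i. i \<le> l \<Longrightarrow> flip k i (x @ [r]) = flip k i x @ [r]"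
    using l(1) "1.prems"(2) by (intro flip_snoc) auto
  then have "min_flip_step k N (insert (x @ [r]) ((\<lambda>x. x @ [r]) ` V)) (x @ [r]) (y @ [r])"
    unfolding min_flip_step_def using l by (intro bexI[of _ l]) auto
  then show ?case using 1 by simp
qed auto

lemma min_flip_path_flip_1:
  assumes "\<And>t. Suc t < length L \<Longrightarrow> L ! Suc t = flip k 1 (L ! t)" "1 \<le> N"
  shows "min_flip_path k N V L"
  using assms
proof (induction L arbitrary: V rule: induct_list012)
  case (3 x y zs)
  have "min_flip_step k N (insert x V) x y"
    using "3.prems" unfolding min_flip_step_def by (intro bexI[of _ 1]) force+
  moreover have "min_flip_path k N (insert x V) (y # zs)"
    using "3.IH"(2) "3.prems" by (metis Suc_less_eq length_Cons nth_Cons_Suc)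
  ultimately show ?case by simp
qed auto

lemma min_flip_path_concat_blocks:
  assumes "\<And>i V. i \<in> {1..m} \<Longrightarrow> min_flip_path k N V (B i)"
    and "\<And>i. i \<in> {1..m} \<Longrightarrow> B i \<noteq> [] \<and> distinct (B i)"
    and "\<And>i l. i \<in> {1..m} \<Longrightarrow> l \<in> {1..<N} \<Longrightarrow> flip k l (last (B i)) \<in> set (B i)"
    and "\<And>u. 1 \<le> u \<Longrightarrow> Suc u \<le> m \<Longrightarrow> hd (B u) = flip k N (last (B (Suc u)))"
    and "\<And>i i'. i \<in> {1..m} \<Longrightarrow> i' \<in> {1..m} \<Longrightarrow> i \<noteq> i' \<Longrightarrow> set (B i) \<inter> set (B i') = {}"
    and "1 \<le> N"
  shows "distinct (concat (map B (rev [1..<m+1])))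
         \<and> min_flip_path k N V (concat (map B (rev [1..<m+1])))"
  using assms
proof (induction m arbitrary: V)
  case (Suc m)
  define D where "D = concat (map B (rev [1..<m+1]))"
  have IH: "distinct D" "\<And>V. min_flip_path k N V D"
    using Suc.IH[OF Suc.prems(1-3) _ Suc.prems(5,6)] Suc.prems(4) unfolding D_def by auto
  have concat_Suc: "concat (map B (rev [1..<Suc m+1])) = B (Suc m) @ D"
    unfolding D_def by simp
  have "set (B (Suc m)) \<inter> set D = {}"
    using Suc.prems(5) unfolding D_def by fastforce
  then have "distinct (B (Suc m) @ D)" using IH(1) Suc.prems(2) by simp
  moreover have "min_flip_path k N V (B (Suc m) @ D)"
  proof (rule min_flip_path_append)
    show "min_flip_path k N V (B (Suc m))" "min_flip_path k N (V \<union> set (B (Suc m))) D"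
      using Suc.prems(1) IH(2) by simp_all
    assume "D \<noteq> []"
    then have "1 \<le> m" "hd D = hd (B m)"
      using Suc.prems(2)[of m] unfolding D_def by (cases m; simp)+
    then show "min_flip_step k N (V \<union> set (B (Suc m))) (last (B (Suc m))) (hd D)"
      unfolding min_flip_step_def using Suc.prems(3,4,6)
      by (intro bexI[of _ N]) auto
  qed
  ultimately show ?case unfolding concat_Suc by simp
qed simp

lemma greedy_aux_min_flip_path:
  assumes "min_flip_path k n (set L) (x # ys)" "distinct (L @ x # ys)"
    and "\<forall>i\<in>{1..n}. flip k i (last (x # ys)) \<in> set (L @ x # ys)"
    and "length ys \<le> f"
  shows "greedy_aux f n k (L @ [x]) = L @ x # ys"
  using assms
proof (induction ys arbitrary: L x f)
  case Nil
  then show ?case by (cases f) auto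
next
  case (Cons y ys)
  obtain f' where f: "f = Suc f'" using Cons.prems(4) by (cases f) auto
  from Cons.prems(1) obtain l where l: "l \<in> {1..n}" "y = flip k l x"
      "\<forall>i\<in>{1..<l}. flip k i x \<in> set (L @ [x])"
    by (auto simp: min_flip_step_def)
  have new: "y \<notin> set (L @ [x])" using Cons.prems(2) by auto
  have "(LEAST i. i \<in> {1..n} \<and> flip k i (last (L @ [x])) \<notin> set (L @ [x])) = l"
    using l new by (intro Least_equality) (auto simp: not_less[symmetric])
  then have "greedy_aux f n k (L @ [x]) = greedy_aux f' n k ((L @ [x]) @ [y])"
    using f l new by auto
  also have "\<dots> = (L @ [x]) @ y # ys"
    by (rule Cons.IH) (use Cons.prems f in auto)
  finally show ?case by simp
qed

section \<open>The lists C(p)\<close>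

declare Clist.simps [simp del]

definition Clist_spec :: "nat \<Rightarrow> cperm \<Rightarrow> bool" where
  "Clist_spec k p \<longleftrightarrow> Clist k p \<noteq> [] \<and> hd (Clist k p) = p
     \<and> flip k (length p) (last (Clist k p)) = p
     \<and> set (Clist k p) = arrangements k p \<and> distinct (Clist k p)
     \<and> min_flip_path k (length p) {} (Clist k p)"

lemma Clist_singleton: "Clist k [a] = map (\<lambda>s. [shift k s a]) [0..<k]"
  by (simp add: Clist.simps)

lemma Clist_spec_singleton:
  assumes "preperm k [a]"
  shows "Clist_spec k [a]"
proof -
  have k: "1 \<le> k" and a: "snd a < k" using assms preperm_colours unfolding preperm_def by auto
  have "last (Clist k [a]) = [shift k (k - 1) a]"
    using k by (simp add: Clist_singleton last_map)
  then have last: "flip k 1 (last (Clist k [a])) = [a]"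
    using k a by (simp add: flip_def shiftl_def shift_shift shift_self shift_0)
  have "inj_on (\<lambda>s. [shift k s a]) {0..<k}"
    by (rule inj_onI) (auto intro: shift_inj)
  then have dist: "distinct (Clist k [a])" by (simp add: Clist_singleton distinct_map)
  have "set (Clist k [a]) = arrangements k [a]"
  proof (intro equalityI subsetI)
    fix \<pi> assume "\<pi> \<in> arrangements k [a]"
    then obtain b where b: "\<pi> = [b]" "fst b = fst a" "snd b < k"
      unfolding arrangements_def by (auto simp: length_Suc_conv)
    then obtain s where "s < k" "shift k s a = b"
      using shift_surj[OF a] by (metis prod.collapse)
    then show "\<pi> \<in> set (Clist k [a])" unfolding b Clist_singleton by auto
  qed (use k in \<open>auto simp: Clist_singleton arrangements_def shift_def\<close>)
  moreover have "min_flip_path k 1 {} (Clist k [a])"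
    by (rule min_flip_path_flip_1)
      (simp_all add: Clist_singleton flip_def shiftl_def shift_shift del: upt_Suc)
  moreover have "hd (Clist k [a]) = [a]"
    using k a by (simp add: Clist_singleton hd_map shift_0)
  ultimately show ?thesis
    unfolding Clist_spec_def using k last dist by (auto simp: Clist_singleton)
qed

definition block :: "nat \<Rightarrow> cperm \<Rightarrow> nat \<Rightarrow> cperm list" where
  "block k p i = map (\<lambda>x. x @ [rr k p (int i)]) (Clist k (rho_i k p i))"

lemma Clist_eq_concat_blocks:
  "2 \<le> length p \<Longrightarrow> Clist k p = concat (map (block k p) (rev [1..<k * length p + 1]))"
  by (subst Clist.simps) (simp add: block_def[abs_def] del: upt_Suc)

lemma last_mem_block: "x \<in> set (block k p i) \<Longrightarrow> last x = rr k p (int i)"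
  by (auto simp: block_def)

lemma blocks_disjoint:
  assumes "preperm k p" "i \<in> {1..k * length p}" "i' \<in> {1..k * length p}" "i \<noteq> i'"
  shows "set (block k p i) \<inter> set (block k p i') = {}"
  using rr_inj[OF assms(1-3)] assms(4) last_mem_block by (metis disjoint_iff)

context
  fixes k p i
  assumes p: "preperm k p" "2 \<le> length p" and spec: "Clist_spec k (rho_i k p i)"
begin

lemma block_nonempty_distinct: "block k p i \<noteq> [] \<and> distinct (block k p i)"
  using spec unfolding Clist_spec_def block_def by (simp add: distinct_map inj_on_def)

lemma set_block: "set (block k p i) = (\<lambda>y. y @ [rr k p (int i)]) ` arrangements k (rho_i k p i)"
  using spec unfolding Clist_spec_def block_def by simp

lemma hd_block: "hd (block k p i) = rho_i k p i @ [rr k p (int i)]"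
  using spec unfolding Clist_spec_def block_def by (simp add: hd_map)

lemma last_block: "last (block k p i) = last (Clist k (rho_i k p i)) @ [rr k p (int i)]"
  using spec unfolding Clist_spec_def block_def by (simp add: last_map)

lemma length_last_Clist_rho_i: "length (last (Clist k (rho_i k p i))) = length p - 1"
  using spec last_in_set unfolding Clist_spec_def arrangements_def by fastforce

lemma flip_last_block: "flip k (length p) (last (block k p i)) = shift k 1 (rr k p (int i)) # rho_i k p i"
proof -
  let ?L = "last (Clist k (rho_i k p i))"
  have "length p = Suc (length ?L)"
    using length_last_Clist_rho_i p(2) by simp
  then have "flip k (length p) (last (block k p i)) = shift k 1 (rr k p (int i)) # flip k (length ?L) ?L"
    unfolding last_block by (simp only: flip_length_snoc)
  then show ?thesis
    using spec length_last_Clist_rho_i unfolding Clist_spec_def by simp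
qed

lemma flip_last_block_in_block:
  assumes "l \<in> {1..<length p}"
  shows "flip k l (last (block k p i)) \<in> set (block k p i)"
proof -
  have "flip k l (last (block k p i)) = flip k l (last (Clist k (rho_i k p i))) @ [rr k p (int i)]"
    unfolding last_block using assms length_last_Clist_rho_i by (intro flip_snoc) auto
  moreover have "flip k l (last (Clist k (rho_i k p i))) \<in> arrangements k (rho_i k p i)"
    using spec last_in_set preperm_colours[OF p(1)]
    by (intro flip_in_arrangements) (auto simp: Clist_spec_def)
  ultimately show ?thesis using set_block by simp
qed

lemma min_flip_path_block: "min_flip_path k (length p) V (block k p i)"
proof -
  have "min_flip_path k (length p - 1) ((\<lambda>y. y @ [rr k p (int i)]) ` {}) (block k p i)"
    unfolding block_def using spec
    by (intro min_flip_path_map_snoc) (auto simp: Clist_spec_def arrangements_def)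
  then show ?thesis by (rule min_flip_path_mono) auto
qed

end

lemma hd_block_eq_flip_last_block:
  assumes "preperm k p" "2 \<le> length p"
    and "Clist_spec k (rho_i k p u)" "Clist_spec k (rho_i k p (Suc u))"
  shows "hd (block k p u) = flip k (length p) (last (block k p (Suc u)))"
proof -
  have k: "1 \<le> k" and j: "1 \<le> length p" using preperm_colours[OF assms(1)] assms(2) by simp_all
  have "hd (block k p u) = map (\<lambda>t. rr k p (int u - int (length p) + int t)) (map Suc [0..<length p])"
    using hd_block[OF assms(1-3)] rho_i_snoc_rr[OF j] by (simp add: map_Suc_upt)
  also have "\<dots> = map (\<lambda>t. rr k p (int (Suc u) - int (length p) + int t)) [0..<length p]"
    by (simp add: algebra_simps)
  also have "\<dots> = shift k 1 (rr k p (int (Suc u))) # rho_i k p (Suc u)"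
    by (rule shift_rr_Cons_rho_i[OF k j, symmetric])
  also have "\<dots> = flip k (length p) (last (block k p (Suc u)))"
    by (rule flip_last_block[OF assms(1,2,4), symmetric])
  finally show ?thesis .
qed

context
  fixes k p
  assumes p: "preperm k p" "2 \<le> length p"
    and spec: "\<And>i. i \<in> {1..k * length p} \<Longrightarrow> Clist_spec k (rho_i k p i)"
begin

lemma block_index_bounds: "k * length p \<in> {1..k * length p}" "1 \<in> {1..k * length p}"
  using preperm_colours[OF p(1)] p(2) by (simp_all del: length_greater_0_conv)

lemma hd_last_Clist_blocks:
  "Clist k p \<noteq> [] \<and> hd (Clist k p) = hd (block k p (k * length p))
   \<and> last (Clist k p) = last (block k p 1)"
proof -
  define m where "m = k * length p"
  have m: "1 \<le> m" using block_index_bounds unfolding m_def by simp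
  have C: "Clist k p = concat (map (block k p) (rev [1..<m + 1]))"
    using Clist_eq_concat_blocks[OF p(2)] unfolding m_def .
  have "rev [1..<m + 1] = m # rev [1..<m]" using m by simp
  then have "hd (Clist k p) = hd (block k p m)" "Clist k p \<noteq> []"
    using block_nonempty_distinct[OF p spec[OF block_index_bounds(1)]]
    unfolding C m_def by simp_all
  moreover have "rev [1..<m + 1] = rev [Suc 1..<m + 1] @ [1]" using m by (simp add: upt_conv_Cons)
  then have "last (Clist k p) = last (block k p 1)"
    using block_nonempty_distinct[OF p spec[OF block_index_bounds(2)]] unfolding C by simp
  ultimately show ?thesis unfolding m_def by simp
qed

lemma hd_block_max: "hd (block k p (k * length p)) = p"
proof -
  have j: "1 \<le> length p" using p(2) by simp
  have "hd (block k p (k * length p))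
        = map (\<lambda>t. rr k p (int (k * length p) - int (length p) + int t)) (map Suc [0..<length p])"
    using hd_block[OF p spec[OF block_index_bounds(1)]] rho_i_snoc_rr[OF j] j
    by (simp add: map_Suc_upt)
  also have "\<dots> = map (\<lambda>t. rr k p ((int t + 1 - int (length p)) + int (k * length p))) [0..<length p]"
    by (simp add: algebra_simps)
  also have "\<dots> = p"
    unfolding rr_periodic by (rule rr_window_eq_self[OF p(1)])
  finally show ?thesis .
qed

lemma flip_last_block_1: "flip k (length p) (last (block k p 1)) = p"
proof -
  have k: "1 \<le> k" and j: "1 \<le> length p" using preperm_colours[OF p(1)] p(2) by simp_all
  have "flip k (length p) (last (block k p 1)) = shift k 1 (rr k p (int 1)) # rho_i k p 1"
    by (rule flip_last_block[OF p spec[OF block_index_bounds(2)]])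
  also have "\<dots> = map (\<lambda>t. rr k p (int t + 1 - int (length p))) [0..<length p]"
    using shift_rr_Cons_rho_i[OF k j, of 1] by (simp add: algebra_simps)
  finally show ?thesis using rr_window_eq_self[OF p(1)] by simp
qed

lemma set_Clist_blocks: "set (Clist k p) = arrangements k p"
proof -
  have "set (Clist k p) = (\<Union>i\<in>{1..k * length p}. set (block k p i))"
    unfolding Clist_eq_concat_blocks[OF p(2)]
    by (simp del: upt_Suc add: atLeastLessThanSuc_atLeastAtMost)
  also have "\<dots> = arrangements k p"
    unfolding arrangements_eq_UN_snoc_rr[OF p] using set_block[OF p spec] by simp
  finally show ?thesis .
qed

lemma distinct_min_flip_path_Clist_blocks:
  "distinct (Clist k p) \<and> min_flip_path k (length p) {} (Clist k p)"
  unfolding Clist_eq_concat_blocks[OF p(2)]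
proof (rule min_flip_path_concat_blocks)
  show "\<And>u. 1 \<le> u \<Longrightarrow> Suc u \<le> k * length p \<Longrightarrow>
      hd (block k p u) = flip k (length p) (last (block k p (Suc u)))"
    using hd_block_eq_flip_last_block[OF p] spec by simp
qed (use p spec block_nonempty_distinct min_flip_path_block flip_last_block_in_block
     blocks_disjoint in auto)

lemma Clist_spec_step: "Clist_spec k p"
  using hd_last_Clist_blocks hd_block_max flip_last_block_1 set_Clist_blocks
    distinct_min_flip_path_Clist_blocks
  unfolding Clist_spec_def by simp

end

lemma Clist_spec: "preperm k p \<Longrightarrow> Clist_spec k p"
proof (induction k p rule: Clist.induct)
  case (1 k p)
  show ?case
  proof (cases "length p \<le> 1")
    case True
    then obtain a where "p = [a]" using "1.prems" unfolding preperm_def by (cases p) auto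
    then show ?thesis using Clist_spec_singleton "1.prems" by simp
  next
    case False
    show ?thesis
      using "1.IH"[OF False] preperm_rho_i(1)[OF "1.prems"] False
      by (intro Clist_spec_step[OF "1.prems"]) (auto simp del: upt_Suc)
  qed
qed

lemma preperm_ident: "1 \<le> n \<Longrightarrow> 1 \<le> k \<Longrightarrow> preperm k (ident n)"
  by (auto simp: preperm_def ident_def distinct_map inj_on_def)

theorem corollary5:
  fixes n k :: nat
  assumes "n \<ge> 1" and "k \<ge> 1"
  shows "greedy n k = Clist k (ident n)
         \<and> distinct (greedy n k)
         \<and> set (greedy n k) = colperms n k
         \<and> flip k n (last (greedy n k)) = ident n"
proof -
  define C where "C = Clist k (ident n)"
  have "length (ident n) = n" by (simp add: ident_def)
  then have C: "C = ident n # tl C" "distinct C" "set C = colperms n k" "flip k n (last C) = ident n"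
    and path: "min_flip_path k n {} C"
    using Clist_spec[OF preperm_ident[OF assms]]
    unfolding C_def Clist_spec_def arrangements_ident by (metis list.collapse)+
  have "greedy_aux (card (colperms n k)) n k ([] @ [ident n]) = [] @ ident n # tl C"
  proof (rule greedy_aux_min_flip_path)
    show "min_flip_path k n (set []) (ident n # tl C)" "distinct ([] @ ident n # tl C)"
      using path C(1,2) by simp_all
    show "\<forall>i\<in>{1..n}. flip k i (last (ident n # tl C)) \<in> set ([] @ ident n # tl C)"
      using C flip_in_arrangements[OF _ assms(2)] last_in_set arrangements_ident
      by (metis append_Nil list.discI)
    show "length (tl C) \<le> card (colperms n k)"
      using C(1-3) distinct_card by (metis diff_le_self length_tl)
  qed
  then have "greedy n k = C" unfolding greedy_def using C(1) by simp
  then show ?thesis using C C_def by simp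
qed

end
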